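(* Let $n\geq 2$ be a natural number and let $R\subseteq I=[0,1]$ be a nonempty perfect (closed, without isolated points) subset. Then the $n$-Split Interval $S_n(R)$ contains a subspace homeomorphic to the $n$-Split Interval $S_n(I)$.
   Context: For $n\geq 2$ and a perfect set $R\subseteq[0,1]$, the $n$-Split Interval of $R$, $S_n(R)$, is the set $R\times\{0,\ldots,n-1\}$ with the topology in which the points $(x,i)$ with $i\in\{2,\ldots,n-1\}$ are isolated, and the points $(x,0)$ and $(x,1)$ have respective basic neighbourhoods $\{(x,0)\}\cup\{(y,i): y\in R,\ z_0<y<x,\ i\in\{0,\ldots,n-1\}\}$ and $\{(x,1)\}\cup\{(y,i): y\in R,\ x<y<z_1,\ i\in\{0,\ldots,n-1\}\}$, where $z_0,z_1\in R$ with $z_0<x<z_1$; if $x=\min R$ then $(x,0)$ is isolated, and if $x=\max R$ then $(x,1)$ is isolated. $S_n(I)$ is $S_n(R)$ for $R=I=[0,1]$. *)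

theory Defs
  imports "HOL-Analysis.Analysis"
begin

definition perfect_set :: "real set \<Rightarrow> bool" where
  "perfect_set R \<longleftrightarrow> closed R \<and> (\<forall>x\<in>R. x islimpt R)"

definition split_basis :: "nat \<Rightarrow> real set \<Rightarrow> (real \<times> nat) set set" where
  "split_basis n R =
     {{(x, i)} | x i. x \<in> R \<and> 2 \<le> i \<and> i < n}
   \<union> {{(x, 0)} | x. x \<in> R \<and> x = Inf R}
   \<union> {{(x, 0)} \<union> {(y, i) | y i. y \<in> R \<and> z0 < y \<and> y < x \<and> i < n} | x z0.
        x \<in> R \<and> z0 \<in> R \<and> z0 < x}
   \<union> {{(x, 1)} | x. x \<in> R \<and> x = Sup R}
   \<union> {{(x, 1)} \<union> {(y, i) | y i. y \<in> R \<and> x < y \<and> y < z1 \<and> i < n} | x z1.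
        x \<in> R \<and> z1 \<in> R \<and> x < z1}"

definition split_interval :: "nat \<Rightarrow> real set \<Rightarrow> (real \<times> nat) topology" where
  "split_interval n R = topology_generated_by (split_basis n R)"

end

theory Submission
  imports Defs
begin

text \<open>A perfect compact set \<open>R\<close> contains a Cantor-like tree of points indexed by the
  dyadic rationals of \<open>[0, 1]\<close> that preserves their order. Taking one-sided limits along the
  tree gives, for each \<open>x \<in> [0, 1]\<close>, a (possibly degenerate) interval \<open>[g x, h x]\<close> with ends in
  \<open>R\<close>, the intervals for \<open>x < y\<close> being strictly ordered. The map sending \<open>(x, 1)\<close> to
  \<open>(h x, 1)\<close> and every other \<open>(x, i)\<close> to \<open>(g x, i)\<close> embeds \<open>S\<^sub>n([0, 1])\<close> into \<open>S\<^sub>n(R)\<close>: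
  left neighbourhoods of \<open>(x, 0)\<close> correspond to left neighbourhoods of \<open>(g x, 0)\<close> because
  \<open>g\<close> is left continuous, and symmetrically for \<open>(x, 1)\<close> and \<open>h\<close>.\<close>

section \<open>Basic neighbourhoods in split intervals\<close>

definition split_left :: "nat \<Rightarrow> real set \<Rightarrow> real \<Rightarrow> real \<Rightarrow> (real \<times> nat) set" where
  "split_left n R x z = {(x, 0)} \<union> {(y, i) | y i. y \<in> R \<and> z < y \<and> y < x \<and> i < n}"

definition split_right :: "nat \<Rightarrow> real set \<Rightarrow> real \<Rightarrow> real \<Rightarrow> (real \<times> nat) set" where
  "split_right n R x z = {(x, 1)} \<union> {(y, i) | y i. y \<in> R \<and> x < y \<and> y < z \<and> i < n}"

lemma mem_split_left:
  "(a, b) \<in> split_left n R x z \<longleftrightarrow> (a = x \<and> b = 0) \<or> (a \<in> R \<and> z < a \<and> a < x \<and> b < n)"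
  unfolding split_left_def by auto

lemma mem_split_right:
  "(a, b) \<in> split_right n R x z \<longleftrightarrow> (a = x \<and> b = 1) \<or> (a \<in> R \<and> x < a \<and> a < z \<and> b < n)"
  unfolding split_right_def by auto

lemma split_left_antimono: "z \<le> z' \<Longrightarrow> split_left n R x z' \<subseteq> split_left n R x z"
  unfolding split_left_def by auto

lemma split_right_mono: "z' \<le> z \<Longrightarrow> split_right n R x z' \<subseteq> split_right n R x z"
  unfolding split_right_def by auto

lemma split_basis_iff:
  "U \<in> split_basis n R \<longleftrightarrow>
     (\<exists>x i. U = {(x, i)} \<and> x \<in> R \<and> 2 \<le> i \<and> i < n)
   \<or> (U = {(Inf R, 0)} \<and> Inf R \<in> R)
   \<or> (\<exists>x z. U = split_left n R x z \<and> x \<in> R \<and> z \<in> R \<and> z < x)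
   \<or> (U = {(Sup R, 1)} \<and> Sup R \<in> R)
   \<or> (\<exists>x z. U = split_right n R x z \<and> x \<in> R \<and> z \<in> R \<and> x < z)"
  unfolding split_basis_def split_left_def split_right_def by blast

lemma split_basis_subset: "U \<in> split_basis n R \<Longrightarrow> 2 \<le> n \<Longrightarrow> U \<subseteq> R \<times> {..<n}"
  unfolding split_basis_iff by (auto simp: split_left_def split_right_def)

lemma split_basis_covers:
  assumes "x \<in> R" "i < n"
  shows "\<exists>U \<in> split_basis n R. (x, i) \<in> U"
proof -
  have "2 \<le> i \<or> i = 0 \<or> i = 1" by linarith
  then consider "2 \<le> i" | "i = 0" "\<exists>z\<in>R. z < x" | "i = 0" "\<forall>z\<in>R. x \<le> z"
    | "i = 1" "\<exists>z\<in>R. x < z" | "i = 1" "\<forall>z\<in>R. z \<le> x"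
    by (metis not_less)
  then show ?thesis
  proof cases
    case 1
    then have "{(x, i)} \<in> split_basis n R" using assms unfolding split_basis_iff by blast
    then show ?thesis by blast
  next
    case 2
    then obtain z where "z \<in> R" "z < x" by blast
    then have "split_left n R x z \<in> split_basis n R" using assms unfolding split_basis_iff by blast
    moreover have "(x, i) \<in> split_left n R x z" using 2 by (simp add: mem_split_left)
    ultimately show ?thesis by blast
  next
    case 3
    then have "Inf R = x" using assms by (intro cInf_eq_minimum) auto
    then have "{(x, i)} \<in> split_basis n R" using assms 3 unfolding split_basis_iff by blast
    then show ?thesis by blast
  next
    case 4
    then obtain z where "z \<in> R" "x < z" by blast
    then have "split_right n R x z \<in> split_basis n R" using assms unfolding split_basis_iff by blast
    moreover have "(x, i) \<in> split_right n R x z" using 4 by (simp add: mem_split_right)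
    ultimately show ?thesis by blast
  next
    case 5
    then have "Sup R = x" using assms by (intro cSup_eq_maximum) auto
    then have "{(x, i)} \<in> split_basis n R" using assms 5 unfolding split_basis_iff by blast
    then show ?thesis by blast
  qed
qed

lemma topspace_split_interval:
  assumes "2 \<le> n"
  shows "topspace (split_interval n R) = R \<times> {..<n}"
  using split_basis_subset[OF _ assms] split_basis_covers
  unfolding split_interval_def by fastforce

lemma split_basis_left_nbhd:
  assumes "U \<in> split_basis n R" "(a, 0) \<in> U" "a \<noteq> Inf R"
  obtains z where "z \<in> R" "z < a" "split_left n R a z \<subseteq> U"
  using assms unfolding split_basis_iff
proof (elim disjE exE conjE)
  fix x z assume U: "U = split_left n R x z" "z \<in> R" "z < x"
  then have "z < a" "split_left n R a z \<subseteq> U"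
    using assms(2) unfolding U(1) split_left_def by auto
  then show thesis using that U by blast
next
  fix x z assume U: "U = split_right n R x z" "x \<in> R" "x < z"
  then have "x < a" "split_left n R a x \<subseteq> U"
    using assms(2) unfolding U(1) split_left_def split_right_def by auto
  then show thesis using that U by blast
qed auto

lemma split_basis_right_nbhd:
  assumes "U \<in> split_basis n R" "(a, 1) \<in> U" "a \<noteq> Sup R"
  obtains z where "z \<in> R" "a < z" "split_right n R a z \<subseteq> U"
  using assms unfolding split_basis_iff
proof (elim disjE exE conjE)
  fix x z assume U: "U = split_left n R x z" "x \<in> R" "z < x"
  then have "a < x" "split_right n R a x \<subseteq> U"
    using assms(2) unfolding U(1) split_left_def split_right_def by auto
  then show thesis using that U by blast
next
  fix x z assume U: "U = split_right n R x z" "z \<in> R" "x < z"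
  then have "a < z" "split_right n R a z \<subseteq> U"
    using assms(2) unfolding U(1) split_right_def by auto
  then show thesis using that U by blast
qed auto

lemma openin_topology_generated_by_local:
  assumes "\<And>p. p \<in> V \<Longrightarrow> \<exists>b\<in>B. p \<in> b \<and> b \<subseteq> V"
  shows "openin (topology_generated_by B) V"
proof -
  have "V = \<Union>{b \<in> B. b \<subseteq> V}" using assms by blast
  moreover have "generate_topology_on B (\<Union>{b \<in> B. b \<subseteq> V})"
    by (rule generate_topology_on.UN) (auto intro: generate_topology_on.Basis)
  ultimately show ?thesis by (simp add: openin_topology_generated_by_iff)
qed

section \<open>Embedding split intervals along ordered gaps\<close>

locale split_embedding =
  fixes n :: nat and S R :: "real set" and g h :: "real \<Rightarrow> real"
  assumes two_le_n: "2 \<le> n"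
    and compact_S: "compact S" and S_nonempty: "S \<noteq> {}"
    and g_in: "x \<in> S \<Longrightarrow> g x \<in> R"
    and h_in: "x \<in> S \<Longrightarrow> h x \<in> R"
    and g_le_h: "x \<in> S \<Longrightarrow> g x \<le> h x"
    and h_less_g: "x \<in> S \<Longrightarrow> y \<in> S \<Longrightarrow> x < y \<Longrightarrow> h x < g y"
    and g_Inf: "g (Inf S) = Inf R"
    and h_Sup: "h (Sup S) = Sup R"
    and g_left_continuous: "x \<in> S \<Longrightarrow> z \<in> R \<Longrightarrow> z < g x \<Longrightarrow> \<exists>y\<in>S. y < x \<and> z < g y"
    and h_right_continuous: "x \<in> S \<Longrightarrow> z \<in> R \<Longrightarrow> h x < z \<Longrightarrow> \<exists>y\<in>S. x < y \<and> h y < z"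
begin

lemma Inf_S_in: "Inf S \<in> S"
  using closed_contains_Inf[OF S_nonempty bounded_imp_bdd_below] compact_S
  by (simp add: compact_imp_bounded compact_imp_closed)

lemma Sup_S_in: "Sup S \<in> S"
  using closed_contains_Sup[OF S_nonempty bounded_imp_bdd_above] compact_S
  by (simp add: compact_imp_bounded compact_imp_closed)

lemma g_less_g_iff: "x \<in> S \<Longrightarrow> y \<in> S \<Longrightarrow> g x < g y \<longleftrightarrow> x < y"
  using g_le_h h_less_g by (smt (verit) linorder_neqE_linordered_idom)

lemma h_less_h_iff: "x \<in> S \<Longrightarrow> y \<in> S \<Longrightarrow> h x < h y \<longleftrightarrow> x < y"
  using g_le_h h_less_g by (smt (verit) linorder_neqE_linordered_idom)

lemma h_less_g_iff: "x \<in> S \<Longrightarrow> y \<in> S \<Longrightarrow> h x < g y \<longleftrightarrow> x < y"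
  using g_le_h h_less_g by (smt (verit) linorder_neqE_linordered_idom)

lemma g_eq_g_iff: "x \<in> S \<Longrightarrow> y \<in> S \<Longrightarrow> g x = g y \<longleftrightarrow> x = y"
  using g_less_g_iff by (metis linorder_neqE_linordered_idom order_less_irrefl)

lemma h_eq_h_iff: "x \<in> S \<Longrightarrow> y \<in> S \<Longrightarrow> h x = h y \<longleftrightarrow> x = y"
  using h_less_h_iff by (metis linorder_neqE_linordered_idom order_less_irrefl)

lemma g_eq_Inf_iff: "x \<in> S \<Longrightarrow> g x = Inf R \<longleftrightarrow> x = Inf S"
  using g_eq_g_iff[OF _ Inf_S_in] g_Inf by simp

lemma h_eq_Sup_iff: "x \<in> S \<Longrightarrow> h x = Sup R \<longleftrightarrow> x = Sup S"
  using h_eq_h_iff[OF _ Sup_S_in] h_Sup by simp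

definition embed :: "real \<times> nat \<Rightarrow> real \<times> nat" where
  "embed p = (if snd p = 1 then h (fst p) else g (fst p), snd p)"

lemma inj_on_embed: "inj_on embed (S \<times> {..<n})"
  by (auto simp: inj_on_def embed_def g_eq_g_iff h_eq_h_iff split: if_splits)

lemma embed_in_split_left_iff:
  assumes "x \<in> S" "w \<in> S" "p \<in> S \<times> {..<n}"
  shows "embed p \<in> split_left n R (g x) (h w) \<longleftrightarrow> p \<in> split_left n S x w"
  using assms g_in h_in
  by (cases p) (auto simp: embed_def mem_split_left g_eq_g_iff g_less_g_iff h_less_h_iff h_less_g_iff)

lemma embed_in_split_right_iff:
  assumes "x \<in> S" "v \<in> S" "p \<in> S \<times> {..<n}"
  shows "embed p \<in> split_right n R (h x) (g v) \<longleftrightarrow> p \<in> split_right n S x v"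
  using assms g_in h_in
  by (cases p) (auto simp: embed_def mem_split_right h_eq_h_iff g_less_g_iff h_less_h_iff h_less_g_iff)

lemma embed_in_topspace: "embed ` (S \<times> {..<n}) \<subseteq> R \<times> {..<n}"
  using g_in h_in by (auto simp: embed_def)

lemma split_left_subset_embed_preimage:
  assumes "x \<in> S" "w \<in> S"
  shows "split_left n S x w \<subseteq> embed -` split_left n R (g x) (h w) \<inter> S \<times> {..<n}"
proof
  fix q assume q: "q \<in> split_left n S x w"
  then have "q \<in> S \<times> {..<n}" using assms two_le_n by (cases q) (auto simp: mem_split_left)
  then show "q \<in> embed -` split_left n R (g x) (h w) \<inter> S \<times> {..<n}"
    using embed_in_split_left_iff[OF assms] q by simp
qed

lemma split_right_subset_embed_preimage:
  assumes "x \<in> S" "v \<in> S"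
  shows "split_right n S x v \<subseteq> embed -` split_right n R (h x) (g v) \<inter> S \<times> {..<n}"
proof
  fix q assume q: "q \<in> split_right n S x v"
  then have "q \<in> S \<times> {..<n}" using assms two_le_n by (cases q) (auto simp: mem_split_right)
  then show "q \<in> embed -` split_right n R (h x) (g v) \<inter> S \<times> {..<n}"
    using embed_in_split_right_iff[OF assms] q by simp
qed

lemma split_left_in_embed_preimage:
  assumes U: "U \<in> split_basis n R" and x: "x \<in> S" "x \<noteq> Inf S" and gx: "(g x, 0) \<in> U"
  shows "\<exists>y\<in>S. y < x \<and> split_left n S x y \<subseteq> embed -` U \<inter> S \<times> {..<n}"
proof -
  obtain z where z: "z \<in> R" "z < g x" "split_left n R (g x) z \<subseteq> U"
    using split_basis_left_nbhd[OF U gx] g_eq_Inf_iff x by blast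
  then obtain y where y: "y \<in> S" "y < x" "z < g y" using g_left_continuous x by blast
  then have "split_left n R (g x) (h y) \<subseteq> U"
    using z split_left_antimono[of z "h y"] g_le_h[OF y(1)] by fastforce
  then show ?thesis using split_left_subset_embed_preimage[OF x(1) y(1)] y by blast
qed

lemma split_right_in_embed_preimage:
  assumes U: "U \<in> split_basis n R" and x: "x \<in> S" "x \<noteq> Sup S" and hx: "(h x, 1) \<in> U"
  shows "\<exists>y\<in>S. x < y \<and> split_right n S x y \<subseteq> embed -` U \<inter> S \<times> {..<n}"
proof -
  obtain z where z: "z \<in> R" "h x < z" "split_right n R (h x) z \<subseteq> U"
    using split_basis_right_nbhd[OF U hx] h_eq_Sup_iff x by blast
  then obtain y where y: "y \<in> S" "x < y" "h y < z" using h_right_continuous x by blast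
  then have "split_right n R (h x) (g y) \<subseteq> U"
    using z split_right_mono[of "g y" z] g_le_h[OF y(1)] by fastforce
  then show ?thesis using split_right_subset_embed_preimage[OF x(1) y(1)] y by blast
qed

lemma embed_basic_nbhd:
  assumes U: "U \<in> split_basis n R" and p: "p \<in> S \<times> {..<n}" "embed p \<in> U"
  shows "\<exists>b\<in>split_basis n S. p \<in> b \<and> b \<subseteq> embed -` U \<inter> S \<times> {..<n}"
proof -
  obtain x i where pe: "p = (x, i)" and x: "x \<in> S" and i: "i < n" using p by auto
  have "2 \<le> i \<or> i = 0 \<or> i = 1" by linarith
  then consider "2 \<le> i \<or> (i = 0 \<and> x = Inf S) \<or> (i = 1 \<and> x = Sup S)"
    | "i = 0" "x \<noteq> Inf S" | "i = 1" "x \<noteq> Sup S"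
    by blast
  then show ?thesis
  proof cases
    case 1
    then have "{(x, i)} \<in> split_basis n S" using x i unfolding split_basis_iff by blast
    then show ?thesis using pe p by blast
  next
    case 2
    then have "(g x, 0) \<in> U" using p pe by (simp add: embed_def)
    then obtain y where "y \<in> S" "y < x" "split_left n S x y \<subseteq> embed -` U \<inter> S \<times> {..<n}"
      using split_left_in_embed_preimage[OF U x 2(2)] by blast
    moreover from this have "split_left n S x y \<in> split_basis n S"
      using x unfolding split_basis_iff by blast
    moreover have "p \<in> split_left n S x y" using pe 2 by (simp add: mem_split_left)
    ultimately show ?thesis by blast
  next
    case 3
    then have "(h x, 1) \<in> U" using p pe by (simp add: embed_def)
    then obtain y where "y \<in> S" "x < y" "split_right n S x y \<subseteq> embed -` U \<inter> S \<times> {..<n}"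
      using split_right_in_embed_preimage[OF U x 3(2)] by blast
    moreover from this have "split_right n S x y \<in> split_basis n S"
      using x unfolding split_basis_iff by blast
    moreover have "p \<in> split_right n S x y" using pe 3 by (simp add: mem_split_right)
    ultimately show ?thesis by blast
  qed
qed

lemma basic_eq_embed_preimage:
  assumes U: "U \<in> split_basis n S"
  shows "\<exists>N\<in>split_basis n R. S \<times> {..<n} \<inter> embed -` N = U"
  using U unfolding split_basis_iff[of U]
proof (elim disjE exE conjE)
  fix x i assume Ue: "U = {(x, i)}" "x \<in> S" "2 \<le> i" "i < n"
  then have "{(g x, i)} \<in> split_basis n R" using g_in unfolding split_basis_iff by blast
  moreover have "S \<times> {..<n} \<inter> embed -` {(g x, i)} = U"
    using Ue by (auto simp: embed_def g_eq_g_iff)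
  ultimately show ?thesis by blast
next
  assume Ue: "U = {(Inf S, 0)}" "Inf S \<in> S"
  then have "{(Inf R, 0)} \<in> split_basis n R" using g_in g_Inf unfolding split_basis_iff by metis
  moreover have "S \<times> {..<n} \<inter> embed -` {(Inf R, 0)} = U"
    using Ue two_le_n by (auto simp: embed_def g_eq_Inf_iff)
  ultimately show ?thesis by blast
next
  assume Ue: "U = {(Sup S, 1)}" "Sup S \<in> S"
  then have "{(Sup R, 1)} \<in> split_basis n R" using h_in h_Sup unfolding split_basis_iff by metis
  moreover have "S \<times> {..<n} \<inter> embed -` {(Sup R, 1)} = U"
    using Ue two_le_n by (auto simp: embed_def h_eq_Sup_iff)
  ultimately show ?thesis by blast
next
  fix x w assume Ue: "U = split_left n S x w" "x \<in> S" "w \<in> S" "w < x"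
  then have "split_left n R (g x) (h w) \<in> split_basis n R"
    using g_in h_in h_less_g unfolding split_basis_iff by blast
  moreover have "S \<times> {..<n} \<inter> embed -` split_left n R (g x) (h w) = U"
    using Ue embed_in_split_left_iff split_basis_subset[OF assms two_le_n] by blast
  ultimately show ?thesis by blast
next
  fix x v assume Ue: "U = split_right n S x v" "x \<in> S" "v \<in> S" "x < v"
  then have "split_right n R (h x) (g v) \<in> split_basis n R"
    using g_in h_in h_less_g unfolding split_basis_iff by blast
  moreover have "S \<times> {..<n} \<inter> embed -` split_right n R (h x) (g v) = U"
    using Ue embed_in_split_right_iff split_basis_subset[OF assms two_le_n] by blast
  ultimately show ?thesis by blast
qed

lemma topspace_split_S: "topspace (split_interval n S) = S \<times> {..<n}"
  using topspace_split_interval[OF two_le_n] .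

lemma continuous_map_embed: "continuous_map (split_interval n S) (split_interval n R) embed"
  unfolding split_interval_def[of n R]
proof (rule continuous_on_generated_topo)
  fix U assume "U \<in> split_basis n R"
  show "openin (split_interval n S) (embed -` U \<inter> topspace (split_interval n S))"
    unfolding topspace_split_S unfolding split_interval_def
    by (rule openin_topology_generated_by_local) (use embed_basic_nbhd[OF \<open>U \<in> _\<close>] in simp)
next
  show "embed ` topspace (split_interval n S) \<subseteq> \<Union>(split_basis n R)"
    using embed_in_topspace topspace_split_interval[OF two_le_n, of R] topspace_split_S
    unfolding split_interval_def by simp
qed

lemma continuous_map_embed_inv:
  "continuous_map (subtopology (split_interval n R) (embed ` (S \<times> {..<n})))
     (split_interval n S) (inv_into (S \<times> {..<n}) embed)"
  (is "continuous_map ?T _ ?G")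
proof -
  have top_T: "topspace ?T = embed ` (S \<times> {..<n})"
    using embed_in_topspace topspace_split_interval[OF two_le_n, of R] by auto
  show ?thesis
    unfolding split_interval_def[of n S]
  proof (rule continuous_on_generated_topo)
    fix U assume "U \<in> split_basis n S"
    then obtain N where N: "N \<in> split_basis n R" "S \<times> {..<n} \<inter> embed -` N = U"
      using basic_eq_embed_preimage by blast
    have "?G -` U \<inter> topspace ?T = embed ` (S \<times> {..<n}) \<inter> N"
      unfolding top_T N(2)[symmetric] by (auto simp: inv_into_f_f[OF inj_on_embed])
    moreover have "openin (split_interval n R) N"
      unfolding split_interval_def using N(1) by (rule topology_generated_by_Basis)
    ultimately show "openin ?T (?G -` U \<inter> topspace ?T)"
      by (simp only: openin_subtopology_Int2)
  next
    show "?G ` topspace ?T \<subseteq> \<Union>(split_basis n S)"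
      using topspace_split_S unfolding top_T split_interval_def
      by (auto simp: inv_into_f_f[OF inj_on_embed])
  qed
qed

theorem split_interval_embeds:
  "\<exists>T. T \<subseteq> topspace (split_interval n R) \<and>
     subtopology (split_interval n R) T homeomorphic_space split_interval n S"
proof (intro exI conjI)
  let ?D = "S \<times> {..<n}"
  show "embed ` ?D \<subseteq> topspace (split_interval n R)"
    using embed_in_topspace topspace_split_interval[OF two_le_n, of R] by simp
  have "homeomorphic_maps (split_interval n S) (subtopology (split_interval n R) (embed ` ?D))
      embed (inv_into ?D embed)"
  proof (unfold homeomorphic_maps_def, intro conjI ballI)
    show "continuous_map (split_interval n S) (subtopology (split_interval n R) (embed ` ?D)) embed"
      using continuous_map_embed by (simp add: continuous_map_in_subtopology topspace_split_S)
    show "continuous_map (subtopology (split_interval n R) (embed ` ?D)) (split_interval n S)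
        (inv_into ?D embed)"
      by (rule continuous_map_embed_inv)
    show "inv_into ?D embed (embed p) = p" if "p \<in> topspace (split_interval n S)" for p
      using that inv_into_f_f[OF inj_on_embed] by (simp add: topspace_split_S)
    show "embed (inv_into ?D embed q) = q"
      if "q \<in> topspace (subtopology (split_interval n R) (embed ` ?D))" for q
      using that by (simp add: f_inv_into_f)
  qed
  then show "subtopology (split_interval n R) (embed ` ?D) homeomorphic_space split_interval n S"
    using homeomorphic_maps_imp_homeomorphic_space homeomorphic_space_sym by blast
qed

end

section \<open>A dyadic tree in a perfect compact set\<close>

lemma infinite_obtain_three_ordered:
  fixes A :: "'a::linorder set"
  assumes "infinite A"
  obtains p q r where "p \<in> A" "q \<in> A" "r \<in> A" "p < q" "q < r"
proof -
  obtain x where "x \<in> A" using infinite_imp_nonempty[OF assms] by blast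
  moreover obtain y where "y \<in> A - {x}" using infinite_imp_nonempty[of "A - {x}"] assms by auto
  moreover obtain z where "z \<in> A - {x, y}" using infinite_imp_nonempty[of "A - {x, y}"] assms by auto
  ultimately show thesis
    using that by (metis Diff_iff insertCI linorder_neqE)
qed

lemma perfect_split_point:
  fixes R :: "real set"
  assumes perfect: "\<forall>x\<in>R. x islimpt R" and "R \<inter> {a<..<b} \<noteq> {}"
  shows "\<exists>c\<in>R. R \<inter> {a<..<c} \<noteq> {} \<and> R \<inter> {c<..<b} \<noteq> {}"
proof -
  obtain e where e: "e \<in> R" "a < e" "e < b" using assms(2) by auto
  have "e islimpt R" "0 < min (e - a) (b - e)" using perfect e by auto
  then have "infinite (R \<inter> ball e (min (e - a) (b - e)))"
    unfolding islimpt_eq_infinite_ball by blast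
  moreover have "R \<inter> ball e (min (e - a) (b - e)) \<subseteq> R \<inter> {a<..<b}"
    by (auto simp: ball_def dist_real_def)
  ultimately have "infinite (R \<inter> {a<..<b})" using infinite_super by blast
  then obtain p q r where "p \<in> R \<inter> {a<..<b}" "q \<in> R \<inter> {a<..<b}" "r \<in> R \<inter> {a<..<b}" "p < q" "q < r"
    by (rule infinite_obtain_three_ordered)
  then show ?thesis by (intro bexI[of _ q]) auto
qed

lemma dyadic_between:
  fixes x y :: real
  assumes "0 \<le> x" "x < y" "y \<le> 1"
  obtains m k where "k \<le> 2^m" "x < real k / 2^m" "real k / 2^m < y"
proof -
  have "closure ({x<..<y} \<inter> (\<Union>m k. {real k / 2^m})) = closure {x<..<y}"
    using assms by (intro closure_dyadic_rationals_in_convex_set_pos_1) auto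
  then have "{x<..<y} \<inter> (\<Union>m k. {real k / 2^m}) \<noteq> {}" using assms by auto
  then obtain m k where mk: "x < real k / 2^m" "real k / 2^m < y" by auto
  then have "real k / 2^m < 1" using assms by linarith
  then have "real k < 2^m" by (simp add: divide_less_eq)
  then have "k \<le> 2^m" by (metis less_imp_le of_nat_less_iff of_nat_numeral of_nat_power)
  then show thesis using that mk by blast
qed

locale perfect_compact =
  fixes R :: "real set"
  assumes compact: "compact R" and nonempty: "R \<noteq> {}" and perfect: "\<forall>x\<in>R. x islimpt R"
begin

lemma bdd_above: "bdd_above R" and bdd_below: "bdd_below R"
  using compact by (simp_all add: compact_imp_bounded bounded_imp_bdd_above bounded_imp_bdd_below)

lemma Inf_in: "Inf R \<in> R"
  using closed_contains_Inf[OF nonempty bdd_below] compact by (simp add: compact_imp_closed)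

lemma Sup_in: "Sup R \<in> R"
  using closed_contains_Sup[OF nonempty bdd_above] compact by (simp add: compact_imp_closed)

lemma Inf_le: "x \<in> R \<Longrightarrow> Inf R \<le> x"
  using cInf_lower bdd_below by blast

lemma le_Sup: "x \<in> R \<Longrightarrow> x \<le> Sup R"
  using cSup_upper bdd_above by blast

lemma gap_Inf_Sup: "R \<inter> {Inf R<..<Sup R} \<noteq> {}"
proof -
  have "R \<inter> {Inf R - 1<..<Sup R + 1} \<noteq> {}"
    using Inf_in Inf_le[OF Sup_in] by auto
  then obtain c where "c \<in> R" "R \<inter> {Inf R - 1<..<c} \<noteq> {}" "R \<inter> {c<..<Sup R + 1} \<noteq> {}"
    using perfect_split_point[OF perfect] by blast
  then show ?thesis using Inf_le le_Sup by fastforce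
qed

definition split_point :: "real \<Rightarrow> real \<Rightarrow> real" where
  "split_point a b =
     (SOME c. c \<in> R \<and> R \<inter> {a<..<c} \<noteq> {} \<and> R \<inter> {c<..<b} \<noteq> {})"

lemma split_point:
  assumes "R \<inter> {a<..<b} \<noteq> {}"
  shows "split_point a b \<in> R"
    "R \<inter> {a<..<split_point a b} \<noteq> {}" "R \<inter> {split_point a b<..<b} \<noteq> {}"
  using someI_ex[OF perfect_split_point[OF perfect assms, unfolded Bex_def]]
  unfolding split_point_def by blast+

text \<open>\<open>dyadic_point m k\<close> is the point of \<open>R\<close> labelled by \<open>k / 2^m\<close>: level \<open>m + 1\<close> keeps the
  points of level \<open>m\<close> and splits each of the \<open>2^m\<close> gaps between consecutive ones.\<close>

fun dyadic_point :: "nat \<Rightarrow> nat \<Rightarrow> real" where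
  "dyadic_point 0 k = (if k = 0 then Inf R else Sup R)"
| "dyadic_point (Suc m) k =
     (if even k then dyadic_point m (k div 2)
      else split_point (dyadic_point m (k div 2)) (dyadic_point m (k div 2 + 1)))"

lemma dyadic_point_gaps:
  "(\<forall>k \<le> 2^m. dyadic_point m k \<in> R) \<and>
   (\<forall>k < 2^m. R \<inter> {dyadic_point m k<..<dyadic_point m (k + 1)} \<noteq> {})"
proof (induction m)
  case 0
  then show ?case using Inf_in Sup_in gap_Inf_Sup by auto
next
  case (Suc m)
  have in_R: "dyadic_point (Suc m) k \<in> R" if "k \<le> 2^Suc m" for k
  proof (cases "even k")
    case True
    then show ?thesis using Suc that by auto
  next
    case False
    then have "k div 2 < 2^m" using that by (auto elim!: oddE)
    then show ?thesis using Suc split_point(1) False by auto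
  qed
  have gap: "R \<inter> {dyadic_point (Suc m) k<..<dyadic_point (Suc m) (k + 1)} \<noteq> {}"
    if k: "k < 2^Suc m" for k
  proof (cases "even k")
    case True
    then obtain j where "k = 2 * j" "j < 2^m" using k by auto
    then show ?thesis using Suc split_point(2) by simp
  next
    case False
    then obtain j where "k = 2 * j + 1" "j < 2^m" using k by (auto elim!: oddE)
    then show ?thesis using Suc split_point(3) by simp
  qed
  show ?case using in_R gap by blast
qed

lemma dyadic_point_in: "k \<le> 2^m \<Longrightarrow> dyadic_point m k \<in> R"
  using dyadic_point_gaps by blast

lemma dyadic_point_less_Suc: "k < 2^m \<Longrightarrow> dyadic_point m k < dyadic_point m (k + 1)"
  using dyadic_point_gaps[of m] by fastforce

lemma dyadic_point_strict_mono: "k < k' \<Longrightarrow> k' \<le> 2^m \<Longrightarrow> dyadic_point m k < dyadic_point m k'"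
proof (induction k' rule: less_induct)
  case (less k')
  then obtain j where j: "k' = Suc j" "k \<le> j" by (cases k') auto
  then have "dyadic_point m k \<le> dyadic_point m j"
    using less by (cases "k = j") (auto intro: less_imp_le)
  also have "\<dots> < dyadic_point m k'" using dyadic_point_less_Suc[of j m] j less by simp
  finally show ?case .
qed

lemma dyadic_point_refine: "dyadic_point (m + j) (k * 2^j) = dyadic_point m k"
  by (induction j) simp_all

lemma dyadic_point_less:
  assumes "k \<le> 2^m" "k' \<le> 2^m'" "real k / 2^m < real k' / 2^m'"
  shows "dyadic_point m k < dyadic_point m' k'"
proof -
  have "real (k * 2^m') < real (k' * 2^m)" using assms(3) by (simp add: field_simps)
  then have "k * 2^m' < k' * 2^m" by (simp only: of_nat_less_iff)
  moreover have "k' * 2^m \<le> 2^(m' + m)" using assms(2) by (simp add: power_add)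
  ultimately have "dyadic_point (m + m') (k * 2^m') < dyadic_point (m' + m) (k' * 2^m)"
    by (simp add: add.commute dyadic_point_strict_mono)
  then show ?thesis by (simp only: dyadic_point_refine)
qed

text \<open>Inserting \<open>Inf R\<close> (resp. \<open>Sup R\<close>) keeps the sets nonempty, so that the
  conditionally complete \<open>Sup\<close> and \<open>Inf\<close> are not junk, and fixes the values at \<open>0\<close> and \<open>1\<close>.\<close>

definition left_limit :: "real \<Rightarrow> real" where
  "left_limit x = Sup (insert (Inf R) {dyadic_point m k | m k. k \<le> 2^m \<and> real k / 2^m < x})"

definition right_limit :: "real \<Rightarrow> real" where
  "right_limit x = Inf (insert (Sup R) {dyadic_point m k | m k. k \<le> 2^m \<and> x < real k / 2^m})"

lemma left_set_subset: "insert (Inf R) {dyadic_point m k | m k. k \<le> 2^m \<and> real k / 2^m < x} \<subseteq> R"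
  using Inf_in dyadic_point_in by auto

lemma right_set_subset: "insert (Sup R) {dyadic_point m k | m k. k \<le> 2^m \<and> x < real k / 2^m} \<subseteq> R"
  using Sup_in dyadic_point_in by auto

lemma left_limit_in: "left_limit x \<in> R"
proof -
  have "left_limit x \<in> closure (insert (Inf R) {dyadic_point m k | m k. k \<le> 2^m \<and> real k / 2^m < x})"
    unfolding left_limit_def
    using bdd_above_mono[OF bdd_above left_set_subset] by (intro closure_contains_Sup) auto
  also have "\<dots> \<subseteq> R"
    using left_set_subset compact by (simp add: closure_minimal compact_imp_closed)
  finally show ?thesis .
qed

lemma right_limit_in: "right_limit x \<in> R"
proof -
  have "right_limit x \<in> closure (insert (Sup R) {dyadic_point m k | m k. k \<le> 2^m \<and> x < real k / 2^m})"
    unfolding right_limit_def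
    using bdd_below_mono[OF bdd_below right_set_subset] by (intro closure_contains_Inf) auto
  also have "\<dots> \<subseteq> R"
    using right_set_subset compact by (simp add: closure_minimal compact_imp_closed)
  finally show ?thesis .
qed

lemma dyadic_point_le_left_limit:
  "k \<le> 2^m \<Longrightarrow> real k / 2^m < x \<Longrightarrow> dyadic_point m k \<le> left_limit x"
  unfolding left_limit_def using bdd_above_mono[OF bdd_above left_set_subset]
  by (intro cSup_upper) auto

lemma right_limit_le_dyadic_point:
  "k \<le> 2^m \<Longrightarrow> x < real k / 2^m \<Longrightarrow> right_limit x \<le> dyadic_point m k"
  unfolding right_limit_def using bdd_below_mono[OF bdd_below right_set_subset]
  by (intro cInf_lower) auto

lemma left_limit_0: "left_limit 0 = Inf R"
proof -
  have "{dyadic_point m k | m k. k \<le> 2^m \<and> real k / 2^m < 0} = {}" by (auto simp: not_less)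
  then show ?thesis unfolding left_limit_def by (simp only: cSup_singleton)
qed

lemma right_limit_1: "right_limit 1 = Sup R"
proof -
  have "\<not> 1 < real k / 2^m" if "k \<le> 2^m" for m k
    using that by (simp add: divide_le_eq not_less)
  then have "{dyadic_point m k | m k. k \<le> 2^m \<and> 1 < real k / 2^m} = {}" by auto
  then show ?thesis unfolding right_limit_def by (simp only: cInf_singleton)
qed

lemma left_limit_le_right_limit: "left_limit x \<le> right_limit x"
  unfolding left_limit_def right_limit_def
proof (rule cSup_least)
  fix s assume s: "s \<in> insert (Inf R) {dyadic_point m k | m k. k \<le> 2^m \<and> real k / 2^m < x}"
  show "s \<le> Inf (insert (Sup R) {dyadic_point m k | m k. k \<le> 2^m \<and> x < real k / 2^m})"
  proof (rule cInf_greatest)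
    fix u assume u: "u \<in> insert (Sup R) {dyadic_point m k | m k. k \<le> 2^m \<and> x < real k / 2^m}"
    consider "s = Inf R" | "u = Sup R"
      | m k m' k' where "s = dyadic_point m k" "k \<le> 2^m" "real k / 2^m < x"
          "u = dyadic_point m' k'" "k' \<le> 2^m'" "x < real k' / 2^m'"
      using s u by blast
    then show "s \<le> u"
    proof cases
      case 1
      then show ?thesis using u right_set_subset Inf_le by blast
    next
      case 2
      then show ?thesis using s left_set_subset le_Sup by blast
    next
      case 3
      then have "dyadic_point m k < dyadic_point m' k'" by (intro dyadic_point_less) auto
      then show ?thesis using 3 by simp
    qed
  qed simp
qed simp

lemma right_limit_less_left_limit:
  assumes "0 \<le> x" "x < y" "y \<le> 1"
  shows "right_limit x < left_limit y"
proof -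
  obtain m k where mk: "k \<le> 2^m" "x < real k / 2^m" "real k / 2^m < y"
    using dyadic_between assms .
  have "0 \<le> real k / 2^m" by simp
  then obtain m' k' where mk': "k' \<le> 2^m'" "real k / 2^m < real k' / 2^m'" "real k' / 2^m' < y"
    using dyadic_between mk(3) assms(3) by blast
  have "right_limit x \<le> dyadic_point m k" using right_limit_le_dyadic_point mk by simp
  also have "\<dots> < dyadic_point m' k'" using dyadic_point_less mk mk' by blast
  also have "\<dots> \<le> left_limit y" using dyadic_point_le_left_limit mk' by simp
  finally show ?thesis .
qed

lemma left_limit_left_continuous:
  assumes x: "x \<in> {0..1}" and z: "z \<in> R" "z < left_limit x"
  shows "\<exists>y\<in>{0..1}. y < x \<and> z < left_limit y"
proof -
  let ?X = "insert (Inf R) {dyadic_point m k | m k. k \<le> 2^m \<and> real k / 2^m < x}"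
  have "\<exists>s\<in>?X. z < s"
    using z(2) less_cSup_iff[of ?X z] bdd_above_mono[OF bdd_above left_set_subset]
    unfolding left_limit_def by simp
  then obtain s where s: "s \<in> ?X" "z < s" by blast
  moreover have "s \<noteq> Inf R" using Inf_le[OF z(1)] s(2) by auto
  ultimately obtain m k where mk: "s = dyadic_point m k" "k \<le> 2^m" "real k / 2^m < x" by auto
  define d where "d = real k / 2^m"
  have d: "0 \<le> d" "d < x" using mk(3) by (simp_all add: d_def)
  define y where "y = (d + x) / 2"
  have y: "y \<in> {0..1}" "y < x" "d < y" using d x unfolding y_def by auto
  then have "s \<le> left_limit y" using dyadic_point_le_left_limit mk unfolding d_def by simp
  then show ?thesis using y s(2) by (intro bexI[of _ y]) simp_all
qed

lemma right_limit_right_continuous: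
  assumes x: "x \<in> {0..1}" and z: "z \<in> R" "right_limit x < z"
  shows "\<exists>y\<in>{0..1}. x < y \<and> right_limit y < z"
proof -
  let ?X = "insert (Sup R) {dyadic_point m k | m k. k \<le> 2^m \<and> x < real k / 2^m}"
  have "\<exists>s\<in>?X. s < z"
    using z(2) cInf_less_iff[of ?X z] bdd_below_mono[OF bdd_below right_set_subset]
    unfolding right_limit_def by simp
  then obtain s where s: "s \<in> ?X" "s < z" by blast
  moreover have "s \<noteq> Sup R" using le_Sup[OF z(1)] s(2) by auto
  ultimately obtain m k where mk: "s = dyadic_point m k" "k \<le> 2^m" "x < real k / 2^m" by auto
  define d where "d = real k / 2^m"
  have d: "d \<le> 1" "x < d" using mk by (simp_all add: d_def divide_le_eq)
  define y where "y = (d + x) / 2"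
  have y: "y \<in> {0..1}" "x < y" "y < d" using d x unfolding y_def by auto
  then have "right_limit y \<le> s" using right_limit_le_dyadic_point mk unfolding d_def by simp
  then show ?thesis using y s(2) by (intro bexI[of _ y]) simp_all
qed

theorem split_interval_of_unit_interval_embeds:
  assumes "2 \<le> n"
  shows "\<exists>T. T \<subseteq> topspace (split_interval n R) \<and>
           subtopology (split_interval n R) T homeomorphic_space split_interval n {0..1}"
proof -
  interpret split_embedding n "{0..1}" R left_limit right_limit
  proof
    show "2 \<le> n" "compact {0..1::real}" "{0..1::real} \<noteq> {}"
      using assms by auto
    show "left_limit (Inf {0..1}) = Inf R" "right_limit (Sup {0..1}) = Sup R"
      using left_limit_0 right_limit_1 by simp_all
  qed (use left_limit_in right_limit_in left_limit_le_right_limit right_limit_less_left_limit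
      left_limit_left_continuous right_limit_right_continuous in auto)
  show ?thesis by (rule split_interval_embeds)
qed

end

theorem mainTheorem3:
  fixes n :: nat and R :: "real set"
  assumes "n \<ge> 2"
    and "R \<subseteq> {0..1}" and "R \<noteq> {}" and "perfect_set R"
  shows "\<exists>T. T \<subseteq> topspace (split_interval n R) \<and>
           subtopology (split_interval n R) T homeomorphic_space split_interval n {0..1}"
proof -
  have "compact R"
    using assms(2,4) bounded_subset[OF bounded_closed_interval]
    unfolding perfect_set_def by (simp add: compact_eq_bounded_closed)
  then interpret perfect_compact R
    using assms(3,4) unfolding perfect_set_def by unfold_locales auto
  show ?thesis using split_interval_of_unit_interval_embeds assms(1) by blast
qed

end
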